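(* For every $n\ge1$ and $t\in(0,1)$, with notation as in the context, \begin{align*} \beta_nR_nR_{n-1}&=r_n^2+\beta r_n,\\ \beta_nx_nx_{n-1}&=y_n^2-\alpha y_n,\\ \beta_n(R_nx_{n-1}+x_nR_{n-1})&=2r_ny_n+(2n+\beta+\gamma)r_n-(2n+\alpha+\gamma)y_n-n(n+\gamma). \end{align*}
   Context: Fix $\alpha,\beta,\gamma>0$ and real constants $A,B$ with $A\ge0$, $A+B\ge0$, not both $A$ and $A+B$ equal to $0$. Let $\theta$ be the Heaviside function ($\theta(x)=1$ for $x>0$, $0$ otherwise). For $t\in(0,1)$ put $w(x)=x^{\alpha}(1-x)^{\beta}|x-t|^{\gamma}(A+B\theta(x-t))$ on $[0,1]$. Let $P_n$ be the monic orthogonal polynomials w.r.t. $w$ on $[0,1]$, $\int_0^1P_mP_nw\,dx=h_n\delta_{mn}$, with recurrence $xP_n=P_{n+1}+\alpha_nP_n+\beta_nP_{n-1}$, $P_0=1$, $\beta_0P_{-1}=0$. Define $x_n=\frac{\alpha}{h_n}\int_0^1\frac{P_n^2w}{y}dy$, $R_n=\frac{\beta}{h_n}\int_0^1\frac{P_n^2w}{1-y}dy$, $y_n=\frac{\alpha}{h_{n-1}}\int_0^1\frac{P_nP_{n-1}w}{y}dy$, $r_n=\frac{\beta}{h_{n-1}}\int_0^1\frac{P_nP_{n-1}w}{1-y}dy$ ($n\ge1$). *)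

theory Defs
  imports "HOL-Analysis.Analysis" "HOL-Computational_Algebra.Polynomial"
begin

definition heaviside :: "real \<Rightarrow> real" where
  "heaviside x = (if x > 0 then 1 else 0)"

definition weight :: "real \<Rightarrow> real \<Rightarrow> real \<Rightarrow> real \<Rightarrow> real \<Rightarrow> real \<Rightarrow> real \<Rightarrow> real" where
  "weight al be ga A B t x =
     x powr al * (1 - x) powr be * \<bar>x - t\<bar> powr ga * (A + B * heaviside (x - t))"

definition int01 :: "(real \<Rightarrow> real) \<Rightarrow> real" where
  "int01 f = (LINT y:{0..1}|lborel. f y)"

definition monic_orthogonal :: "(real \<Rightarrow> real) \<Rightarrow> (nat \<Rightarrow> real poly) \<Rightarrow> bool" where
  "monic_orthogonal w P \<longleftrightarrow>
     (\<forall>n. degree (P n) = n \<and> lead_coeff (P n) = 1) \<and>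
     (\<forall>m n. m \<noteq> n \<longrightarrow> int01 (\<lambda>y. poly (P m) y * poly (P n) y * w y) = 0)"

definition hnorm :: "(real \<Rightarrow> real) \<Rightarrow> (nat \<Rightarrow> real poly) \<Rightarrow> nat \<Rightarrow> real" where
  "hnorm w P n = int01 (\<lambda>y. (poly (P n) y)^2 * w y)"

definition xseq :: "real \<Rightarrow> (real \<Rightarrow> real) \<Rightarrow> (nat \<Rightarrow> real poly) \<Rightarrow> nat \<Rightarrow> real" where
  "xseq al w P n = al / hnorm w P n * int01 (\<lambda>y. (poly (P n) y)^2 * w y / y)"

definition Rseq :: "real \<Rightarrow> (real \<Rightarrow> real) \<Rightarrow> (nat \<Rightarrow> real poly) \<Rightarrow> nat \<Rightarrow> real" where
  "Rseq be w P n = be / hnorm w P n * int01 (\<lambda>y. (poly (P n) y)^2 * w y / (1 - y))"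

text \<open>For n \<ge> 1.\<close>
definition yseq :: "real \<Rightarrow> (real \<Rightarrow> real) \<Rightarrow> (nat \<Rightarrow> real poly) \<Rightarrow> nat \<Rightarrow> real" where
  "yseq al w P n = al / hnorm w P (n - 1) *
     int01 (\<lambda>y. poly (P n) y * poly (P (n - 1)) y * w y / y)"

definition rseq :: "real \<Rightarrow> (real \<Rightarrow> real) \<Rightarrow> (nat \<Rightarrow> real poly) \<Rightarrow> nat \<Rightarrow> real" where
  "rseq be w P n = be / hnorm w P (n - 1) *
     int01 (\<lambda>y. poly (P n) y * poly (P (n - 1)) y * w y / (1 - y))"

end

theory Submission
  imports Defs
begin

text \<open>
  For a zero \<open>s \<in> {0, 1, t}\<close> of the weight write \<open>K_s(f,g) = \<integral>\<^sub>0\<^sup>1 f g w / (y - s)\<close>.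
  Dividing \<open>g\<close> by \<open>y - s\<close> and using orthogonality gives
  \<open>K_s(P_n,P_n) K_s(P_{n-1},P_{n-1}) = K_s(P_n,P_{n-1}) (K_s(P_n,P_{n-1}) - h_{n-1})\<close>;
  at \<open>s = 0\<close> and \<open>s = 1\<close> these are the first two identities. Integrating \<open>(f w)'\<close> over
  \<open>[0,t]\<close> and \<open>[t,1]\<close>, where \<open>f w\<close> vanishes at the endpoints, gives
  \<open>\<integral> f' w + \<alpha> K_0(f) + \<beta> K_1(f) + \<gamma> K_t(f) = 0\<close>. For \<open>f = P_n\<^sup>2, P_{n-1}\<^sup>2, P_n P_{n-1}\<close>
  this expresses the \<open>K_t\<close>-terms through \<open>x, R, y, r\<close>, and the product identity at
  \<open>s = t\<close> then turns into the third identity.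
\<close>

abbreviation integrable01 :: "(real \<Rightarrow> real) \<Rightarrow> bool" where
  "integrable01 f \<equiv> set_integrable lborel {0..1::real} f"

lemma int01_add:
  "integrable01 f \<Longrightarrow> integrable01 g \<Longrightarrow> int01 (\<lambda>y. f y + g y) = int01 f + int01 g"
  unfolding int01_def by (rule set_integral_add(2))

lemma int01_cmult: "int01 (\<lambda>y. c * f y) = c * int01 f"
  unfolding int01_def by simp

lemma int01_cong: "(\<And>y. y \<in> {0..1} \<Longrightarrow> f y = g y) \<Longrightarrow> int01 f = int01 g"
  unfolding int01_def by (rule set_lebesgue_integral_cong) auto

lemma int01_zero [simp]: "int01 (\<lambda>y. 0) = 0"
  unfolding int01_def by simp

lemma int01_div_one_minus: "int01 (\<lambda>y. g y / (1 - y)) = - int01 (\<lambda>y. g y / (y - 1))"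
proof -
  have "int01 (\<lambda>y. g y / (1 - y)) = int01 (\<lambda>y. (-1) * (g y / (y - 1)))"
    by (rule int01_cong) (metis minus_diff_eq minus_divide_right mult_minus1)
  then show ?thesis
    by (simp only: int01_cmult)
qed

lemma int01_eq_integral: "integrable01 f \<Longrightarrow> int01 f = integral {0..1} f"
  unfolding int01_def by (rule set_borel_integral_eq_integral(2))

lemma integrable01_if_absolutely_integrable_on:
  assumes "g \<in> borel_measurable borel" and "g absolutely_integrable_on {0..1}"
  shows "integrable01 g"
proof -
  have "integrable lebesgue (\<lambda>x. indicat_real {0..1} x *\<^sub>R g x)"
    using assms(2) by (simp add: set_integrable_def)
  then have "integrable lborel (\<lambda>x. indicat_real {0..1} x *\<^sub>R g x)"
    by (subst (asm) integrable_completion) (use assms(1) in measurable)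
  then show ?thesis by (simp add: set_integrable_def)
qed

lemma abs_powr_integrable_on:
  fixes e s :: real
  assumes e: "e > -1" and s: "0 \<le> s" "s \<le> 1"
  shows "(\<lambda>y. \<bar>y - s\<bar> powr e) integrable_on {0..1}"
proof (rule Henstock_Kurzweil_Integration.integrable_combine[OF s])
  have "((\<lambda>y. \<bar>y - s\<bar> powr e) has_integral
      (- ((s - s) powr (e+1) / (e+1))) - (- ((s - 0) powr (e+1) / (e+1)))) {0..s}"
  proof (rule fundamental_theorem_of_calculus_interior[OF s(1)])
    show "continuous_on {0..s} (\<lambda>y. - ((s - y) powr (e+1) / (e+1)))"
      using e by (intro continuous_intros continuous_on_powr') auto
    fix y assume "y \<in> {0<..<s}"
    then show "((\<lambda>y. - ((s - y) powr (e+1) / (e+1))) has_vector_derivative \<bar>y - s\<bar> powr e) (at y)"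
      using e by (auto intro!: derivative_eq_intros
          simp: has_real_derivative_iff_has_vector_derivative[symmetric] abs_if)
  qed
  then show "(\<lambda>y. \<bar>y - s\<bar> powr e) integrable_on {0..s}"
    by blast
next
  have "((\<lambda>y. \<bar>y - s\<bar> powr e) has_integral
      ((1 - s) powr (e+1) / (e+1) - (s - s) powr (e+1) / (e+1))) {s..1}"
  proof (rule fundamental_theorem_of_calculus_interior[OF s(2)])
    show "continuous_on {s..1} (\<lambda>y. (y - s) powr (e+1) / (e+1))"
      using e by (intro continuous_intros continuous_on_powr') auto
    fix y assume "y \<in> {s<..<1}"
    then show "((\<lambda>y. (y - s) powr (e+1) / (e+1)) has_vector_derivative \<bar>y - s\<bar> powr e) (at y)"
      using e by (auto intro!: derivative_eq_intros
          simp: has_real_derivative_iff_has_vector_derivative[symmetric] abs_if)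
  qed
  then show "(\<lambda>y. \<bar>y - s\<bar> powr e) integrable_on {s..1}"
    by blast
qed

lemma borel_measurable_poly [measurable]: "poly p \<in> borel_measurable (borel :: real measure)"
  by (intro borel_measurable_continuous_onI continuous_intros)

lemma poly_bounded_on_01:
  obtains M :: real where "M \<ge> 0" "\<And>y. y \<in> {0..1} \<Longrightarrow> \<bar>poly p y\<bar> \<le> M"
proof -
  have "compact (poly p ` {0..1::real})"
    by (intro compact_continuous_image continuous_intros) auto
  then obtain M where "\<forall>z\<in>poly p ` {0..1::real}. norm z \<le> M"
    using compact_imp_bounded bounded_iff by metis
  then show ?thesis using that[of "max M 0"] by force
qed

lemma integrable01_poly_mult_bounded:
  fixes g :: "real \<Rightarrow> real"
  assumes "g \<in> borel_measurable borel" and "\<And>y. y \<in> {0..1} \<Longrightarrow> \<bar>g y\<bar> \<le> C"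
  shows "integrable01 (\<lambda>y. poly p y * g y)"
proof -
  obtain M where M: "M \<ge> 0" "\<And>y. y \<in> {0..1} \<Longrightarrow> \<bar>poly p y\<bar> \<le> M"
    using poly_bounded_on_01 by blast
  have "(\<lambda>y. poly p y * g y) absolutely_integrable_on {0..1}"
  proof (rule measurable_bounded_by_integrable_imp_absolutely_integrable)
    show "(\<lambda>y. poly p y * g y) \<in> borel_measurable (lebesgue_on {0..1})"
      using assms(1) by (simp add: measurable_completion measurable_restrict_space1)
    show "(\<lambda>y::real. M * C) integrable_on {0..1}"
      by (intro integrable_continuous_interval continuous_intros)
    fix y :: real assume "y \<in> {0..1}"
    then show "norm (poly p y * g y) \<le> M * C"
      using M assms(2) by (simp add: abs_mult mult_mono)
  qed auto
  then show ?thesis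
    by (rule integrable01_if_absolutely_integrable_on[rotated]) (use assms(1) in measurable)
qed

lemma integrable01_poly_mult_div_zero:
  fixes g :: "real \<Rightarrow> real"
  assumes "g \<in> borel_measurable borel" and s: "0 \<le> s" "s \<le> 1" and e: "e > 0"
    and bound: "\<And>y. y \<in> {0..1} \<Longrightarrow> \<bar>g y\<bar> \<le> C * \<bar>y - s\<bar> powr e"
  shows "integrable01 (\<lambda>y. poly p y * g y / (y - s))"
proof -
  obtain M where M: "M \<ge> 0" "\<And>y. y \<in> {0..1} \<Longrightarrow> \<bar>poly p y\<bar> \<le> M"
    using poly_bounded_on_01 by blast
  have quotient_bound: "\<bar>g y / (y - s)\<bar> \<le> C * \<bar>y - s\<bar> powr (e - 1)" if y: "y \<in> {0..1}" for y
  proof (cases "y = s")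
    case False
    have "\<bar>g y / (y - s)\<bar> = \<bar>g y\<bar> / \<bar>y - s\<bar>"
      by simp
    also have "\<dots> \<le> C * \<bar>y - s\<bar> powr e / \<bar>y - s\<bar>"
      using bound[OF y] by (simp add: divide_right_mono)
    finally show ?thesis
      using False by (simp add: powr_diff)
  qed simp
  have "(\<lambda>y. poly p y * g y / (y - s)) absolutely_integrable_on {0..1}"
  proof (rule measurable_bounded_by_integrable_imp_absolutely_integrable)
    show "(\<lambda>y. poly p y * g y / (y - s)) \<in> borel_measurable (lebesgue_on {0..1})"
      using assms(1) by (simp add: measurable_completion measurable_restrict_space1)
    have "(\<lambda>y. (M * C) *\<^sub>R \<bar>y - s\<bar> powr (e - 1)) integrable_on {0..1}"
      using e s by (intro integrable_cmul abs_powr_integrable_on) auto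
    then show "(\<lambda>y. M * (C * \<bar>y - s\<bar> powr (e - 1))) integrable_on {0..1}"
      by (simp add: mult.assoc)
    fix y :: real assume y: "y \<in> {0..1}"
    have "norm (poly p y * g y / (y - s)) = \<bar>poly p y\<bar> * \<bar>g y / (y - s)\<bar>"
      by (simp add: abs_mult)
    also have "\<dots> \<le> M * (C * \<bar>y - s\<bar> powr (e - 1))"
      using M y quotient_bound[OF y] by (intro mult_mono) auto
    finally show "norm (poly p y * g y / (y - s)) \<le> M * (C * \<bar>y - s\<bar> powr (e - 1))" .
  qed auto
  then show ?thesis
    by (rule integrable01_if_absolutely_integrable_on[rotated]) (use assms(1) in measurable)
qed

lemma lead_coeff_synthetic_div:
  fixes p :: "'a::idom poly"
  assumes "degree p \<ge> 1"
  shows "lead_coeff (synthetic_div p c) = lead_coeff p"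
proof -
  have "synthetic_div p c \<noteq> 0"
    using assms by (simp add: synthetic_div_eq_0_iff)
  then have deg: "degree [:poly p c:] < degree ([:-c, 1:] * synthetic_div p c)"
    using assms by (subst degree_mult_eq) (auto simp: degree_synthetic_div)
  have "lead_coeff p = lead_coeff ([:poly p c:] + [:-c, 1:] * synthetic_div p c)"
    using synthetic_div_correct'[of c p] by (simp only: add.commute)
  also have "\<dots> = lead_coeff ([:-c, 1:] * synthetic_div p c)"
    by (rule lead_coeff_add_le[OF deg])
  also have "\<dots> = lead_coeff (synthetic_div p c)"
    by (simp only: lead_coeff_mult) simp
  finally show ?thesis ..
qed

locale orthogonal_polynomials_01 =
  fixes w :: "real \<Rightarrow> real" and P :: "nat \<Rightarrow> real poly"
  assumes integrable_poly_weight: "\<And>p. integrable01 (\<lambda>y. poly p y * w y)"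
    and weight_nonneg_on: "\<And>y. y \<in> {0..1} \<Longrightarrow> 0 \<le> w y"
    and weight_pos_on_interval: "\<exists>a b. a < b \<and> {a<..<b} \<subseteq> {0..1} \<and> (\<forall>y\<in>{a<..<b}. 0 < w y)"
    and monic_orthogonal_P: "monic_orthogonal w P"
begin

abbreviation inner01 :: "real poly \<Rightarrow> real poly \<Rightarrow> real" where
  "inner01 f g \<equiv> int01 (\<lambda>y. poly f y * poly g y * w y)"

abbreviation h :: "nat \<Rightarrow> real" where
  "h \<equiv> hnorm w P"

lemma degree_P [simp]: "degree (P n) = n"
  using monic_orthogonal_P unfolding monic_orthogonal_def by auto

lemma coeff_P_degree [simp]: "coeff (P n) n = 1"
  using monic_orthogonal_P unfolding monic_orthogonal_def by (metis degree_P)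

lemma P_neq_0 [simp]: "P n \<noteq> 0"
  using coeff_P_degree[of n] by (metis coeff_0 zero_neq_one)

lemma inner_P_P: "m \<noteq> n \<Longrightarrow> inner01 (P m) (P n) = 0"
  using monic_orthogonal_P unfolding monic_orthogonal_def by auto

lemma hnorm_eq_inner: "h n = inner01 (P n) (P n)"
  unfolding hnorm_def by (simp add: power2_eq_square)

lemma int01_weighted_add:
  "int01 (\<lambda>y. poly f y * w y + poly g y * w y) =
   int01 (\<lambda>y. poly f y * w y) + int01 (\<lambda>y. poly g y * w y)"
  by (rule int01_add integrable_poly_weight)+

lemma inner_smult_add:
  "inner01 f (smult c g + r) = c * inner01 f g + inner01 f r"
proof -
  have "inner01 f (smult c g + r) = int01 (\<lambda>y. c * (poly (f * g) y * w y) + poly (f * r) y * w y)"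
    by (rule int01_cong) (simp add: algebra_simps)
  also have "\<dots> = c * int01 (\<lambda>y. poly (f * g) y * w y) + int01 (\<lambda>y. poly (f * r) y * w y)"
    by (simp only: int01_add[OF set_integrable_mult_right[OF integrable_poly_weight] integrable_poly_weight]
        int01_cmult)
  finally show ?thesis
    by simp
qed

lemma inner_P_lower_degree: "degree q < n \<Longrightarrow> inner01 (P n) q = 0"
proof (induction "degree q" arbitrary: q rule: less_induct)
  case less
  show ?case
  proof (cases "q = 0")
    case False
    define d c where "d = degree q" and "c = lead_coeff q"
    define r where "r = q - smult c (P d)"
    have q_eq: "smult c (P d) + r = q"
      by (simp add: r_def)
    have "coeff r d = 0" and "degree r \<le> d"
      by (simp_all add: r_def c_def d_def degree_diff_le)
    then have "r = 0 \<or> degree r < degree q"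
      unfolding d_def by (metis le_neq_implies_less leading_coeff_0_iff)
    then have "inner01 (P n) r = 0"
      using less by auto
    moreover have "inner01 (P n) q = c * inner01 (P n) (P d) + inner01 (P n) r"
      unfolding q_eq[symmetric] by (rule inner_smult_add)
    moreover have "inner01 (P n) (P d) = 0"
      using less.prems by (simp add: d_def inner_P_P)
    ultimately show ?thesis
      by simp
  qed simp
qed

lemma inner_P_same_degree: "degree q = n \<Longrightarrow> inner01 (P n) q = lead_coeff q * h n"
proof -
  assume deg: "degree q = n"
  define c where "c = lead_coeff q"
  define r where "r = q - smult c (P n)"
  have q_eq: "smult c (P n) + r = q"
    by (simp add: r_def)
  have "coeff r n = 0" and "degree r \<le> n"
    using deg by (simp_all add: r_def c_def degree_diff_le)
  then have "r = 0 \<or> degree r < n"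
    by (metis le_neq_implies_less leading_coeff_0_iff)
  then have "inner01 (P n) r = 0"
    using inner_P_lower_degree by auto
  moreover have "inner01 (P n) q = c * inner01 (P n) (P n) + inner01 (P n) r"
    unfolding q_eq[symmetric] by (rule inner_smult_add)
  ultimately show ?thesis
    by (simp add: c_def hnorm_eq_inner)
qed

lemma hnorm_pos: "0 < h n"
proof -
  let ?g = "\<lambda>y. indicator {0..1} y *\<^sub>R ((poly (P n) y)^2 * w y)"
  have int: "integrable lborel ?g"
    using integrable_poly_weight[of "P n * P n"] by (simp add: set_integrable_def power2_eq_square)
  have nonneg: "AE y in lborel. 0 \<le> ?g y"
    using weight_nonneg_on by (auto simp: indicator_def)
  have h_eq: "h n = integral\<^sup>L lborel ?g"
    unfolding hnorm_def int01_def set_lebesgue_integral_def ..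
  obtain a b where ab: "a < b" "\<And>y. a < y \<Longrightarrow> y < b \<Longrightarrow> y \<in> {0..1} \<and> 0 < w y"
    using weight_pos_on_interval by (meson greaterThanLessThan_iff subsetD)
  show ?thesis
  proof (rule ccontr)
    assume "\<not> 0 < h n"
    moreover have "0 \<le> h n"
      unfolding h_eq using nonneg by (rule integral_nonneg_AE)
    ultimately have "AE y in lborel. ?g y = 0"
      using integral_nonneg_eq_0_iff_AE[OF int nonneg] h_eq by simp
    moreover have "AE y in lborel. poly (P n) y \<noteq> 0"
      using AE_not_in[OF finite_imp_null_set_lborel[OF poly_roots_finite[OF P_neq_0]]] by simp
    ultimately have "AE y in lborel. y \<notin> {a<..<b}"
      by eventually_elim (use ab in \<open>fastforce simp: indicator_def\<close>)
    then have "emeasure lborel {a<..<b} = 0"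
      by (subst (asm) AE_iff_measurable[where N="{a<..<b}"]) auto
    then show False
      using ab(1) by simp
  qed
qed

lemma hnorm_recurrence:
  assumes rec: "[:0, 1:] * P n = P (Suc n) + smult a (P n) + smult b (P (n - 1))" and n: "n \<ge> 1"
  shows "h n = b * h (n - 1)"
proof -
  have "inner01 (P n) ([:0, 1:] * P (n - 1)) = lead_coeff ([:0, 1:] * P (n - 1)) * h n"
    using n by (intro inner_P_same_degree) (simp add: degree_mult_eq)
  then have "h n = inner01 (P n) ([:0, 1:] * P (n - 1))"
    by (simp only: lead_coeff_mult) simp
  also have "\<dots> = inner01 (P (n - 1)) ([:0, 1:] * P n)"
    by (rule int01_cong) (simp add: algebra_simps)
  also have "\<dots> = inner01 (P (n - 1)) (smult b (P (n - 1)) + (smult a (P n) + P (Suc n)))"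
    using rec by (simp add: algebra_simps)
  also have "\<dots> = b * h (n - 1)"
    using n by (simp only: inner_smult_add) (simp add: inner_P_P hnorm_eq_inner)
  finally show ?thesis .
qed

lemma inner_pderiv_square: "int01 (\<lambda>y. poly (pderiv (P n * P n)) y * w y) = 0"
proof (cases "n = 0")
  case False
  have "int01 (\<lambda>y. poly (pderiv (P n * P n)) y * w y) = inner01 (P n) (smult 2 (pderiv (P n)))"
    by (rule int01_cong) (simp add: pderiv_mult algebra_simps)
  also have "\<dots> = 0"
    using False by (intro inner_P_lower_degree) (simp add: degree_pderiv)
  finally show ?thesis .
qed (simp add: pderiv_mult pderiv_eq_0_iff[of "P 0", THEN iffD2])

lemma inner_pderiv_consecutive:
  assumes n: "n \<ge> 1"
  shows "int01 (\<lambda>y. poly (pderiv (P n * P (n - 1))) y * w y) = real n * h (n - 1)"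
proof -
  have lead: "lead_coeff (pderiv (P n)) = real n"
    using n by (simp add: degree_pderiv coeff_pderiv)
  have "int01 (\<lambda>y. poly (pderiv (P n * P (n - 1))) y * w y) =
        int01 (\<lambda>y. poly (P n * pderiv (P (n - 1))) y * w y + poly (P (n - 1) * pderiv (P n)) y * w y)"
    by (rule int01_cong) (simp add: pderiv_mult algebra_simps)
  also have "\<dots> = inner01 (P n) (pderiv (P (n - 1))) + inner01 (P (n - 1)) (pderiv (P n))"
    by (simp only: int01_weighted_add) simp
  also have "\<dots> = real n * h (n - 1)"
    using n lead by (simp add: inner_P_lower_degree inner_P_same_degree degree_pderiv)
  finally show ?thesis .
qed

context
  fixes s :: real
  assumes weight_zero: "w s = 0"
    and integrable_div: "\<And>p. integrable01 (\<lambda>y. poly p y * w y / (y - s))"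
begin

text \<open>Since \<open>w s = 0\<close>, the value of the integrand at \<open>y = s\<close>, where Isabelle divides by zero, is irrelevant.\<close>

lemma int01_div_linear:
  "int01 (\<lambda>y. poly f y * poly g y * w y / (y - s)) =
   poly g s * int01 (\<lambda>y. poly f y * w y / (y - s)) + inner01 f (synthetic_div g s)"
proof -
  have g: "poly g y = (y - s) * poly (synthetic_div g s) y + poly g s" for y
    using arg_cong[OF synthetic_div_correct'[of s g], of "\<lambda>q. poly q y"] by (simp add: algebra_simps)
  have pointwise: "poly f y * poly g y * w y / (y - s) =
      poly g s * (poly f y * w y / (y - s)) + poly (f * synthetic_div g s) y * w y" for y
  proof (cases "y = s")
    case False
    then show ?thesis
      by (subst g) (simp add: field_simps)
  qed (simp add: weight_zero)
  have "int01 (\<lambda>y. poly f y * poly g y * w y / (y - s)) =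
        int01 (\<lambda>y. poly g s * (poly f y * w y / (y - s)) + poly (f * synthetic_div g s) y * w y)"
    by (simp only: pointwise)
  also have "\<dots> = poly g s * int01 (\<lambda>y. poly f y * w y / (y - s)) + inner01 f (synthetic_div g s)"
    by (simp only: int01_add[OF set_integrable_mult_right[OF integrable_div] integrable_poly_weight]
        int01_cmult) (simp add: mult.assoc)
  finally show ?thesis .
qed

lemma singular_product:
  assumes n: "n \<ge> 1"
  shows "int01 (\<lambda>y. poly (P n) y * poly (P n) y * w y / (y - s)) *
         int01 (\<lambda>y. poly (P (n - 1)) y * poly (P (n - 1)) y * w y / (y - s)) =
         int01 (\<lambda>y. poly (P n) y * poly (P (n - 1)) y * w y / (y - s)) *
         (int01 (\<lambda>y. poly (P n) y * poly (P (n - 1)) y * w y / (y - s)) - h (n - 1))"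
proof -
  define E where "E k = int01 (\<lambda>y. poly (P k) y * w y / (y - s))" for k
  have square: "int01 (\<lambda>y. poly (P k) y * poly (P k) y * w y / (y - s)) = poly (P k) s * E k" for k
  proof (cases "k = 0")
    case True
    then show ?thesis
      by (simp add: int01_div_linear E_def synthetic_div_eq_0_iff[of "P 0", THEN iffD2])
  next
    case False
    then show ?thesis
      by (simp add: int01_div_linear E_def inner_P_lower_degree degree_synthetic_div)
  qed
  have mixed_low: "int01 (\<lambda>y. poly (P n) y * poly (P (n - 1)) y * w y / (y - s)) = poly (P (n - 1)) s * E n"
    using n by (simp add: int01_div_linear E_def inner_P_lower_degree degree_synthetic_div)
  have "int01 (\<lambda>y. poly (P n) y * poly (P (n - 1)) y * w y / (y - s)) =
        int01 (\<lambda>y. poly (P (n - 1)) y * poly (P n) y * w y / (y - s))"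
    by (simp add: mult.commute mult.left_commute)
  also have "\<dots> = poly (P n) s * E (n - 1) + h (n - 1)"
    using n lead_coeff_synthetic_div[of "P n" s]
    by (simp add: int01_div_linear E_def inner_P_same_degree degree_synthetic_div)
  finally have mixed_high:
    "int01 (\<lambda>y. poly (P n) y * poly (P (n - 1)) y * w y / (y - s)) = poly (P n) s * E (n - 1) + h (n - 1)" .
  have "poly (P (n - 1)) s * E n = poly (P n) s * E (n - 1) + h (n - 1)"
    using mixed_low mixed_high by simp
  then show ?thesis
    unfolding square mixed_high by (simp add: mult_ac)
qed

lemma scaled_singular_product:
  assumes n: "n \<ge> 1" and hb: "h n = b * h (n - 1)"
  defines "K \<equiv> int01 (\<lambda>y. poly (P n) y * poly (P (n - 1)) y * w y / (y - s))"
  shows "b * (c / h n * int01 (\<lambda>y. (poly (P n) y)\<^sup>2 * w y / (y - s)))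
           * (c / h (n - 1) * int01 (\<lambda>y. (poly (P (n - 1)) y)\<^sup>2 * w y / (y - s)))
         = (c / h (n - 1) * K)\<^sup>2 - c * (c / h (n - 1) * K)"
proof -
  define Kn Km where "Kn = int01 (\<lambda>y. (poly (P n) y)\<^sup>2 * w y / (y - s))"
    and "Km = int01 (\<lambda>y. (poly (P (n - 1)) y)\<^sup>2 * w y / (y - s))"
  have prod: "Kn * Km = K * (K - h (n - 1))"
    using singular_product[OF n] unfolding Kn_def Km_def K_def by (simp add: power2_eq_square)
  have H: "0 < h (n - 1)" and "b \<noteq> 0"
    using hnorm_pos[of n] hnorm_pos[of "n - 1"] hb by auto
  have "b * (c / h n * Kn) * (c / h (n - 1) * Km) = (c / h (n - 1))\<^sup>2 * (Kn * Km)"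
    using H \<open>b \<noteq> 0\<close> hb by (simp add: field_simps power2_eq_square)
  also have "\<dots> = (c / h (n - 1) * K)\<^sup>2 - c * (c / h (n - 1) * K)"
    using H unfolding prod by (simp add: field_simps power2_eq_square)
  finally show ?thesis
    unfolding Kn_def Km_def .
qed

end

end

locale jacobi_type_weight =
  fixes al be ga A B t :: real
  assumes al_pos: "al > 0" and be_pos: "be > 0" and ga_pos: "ga > 0"
    and A_nonneg: "A \<ge> 0" and AB_nonneg: "A + B \<ge> 0" and not_both_zero: "\<not> (A = 0 \<and> A + B = 0)"
    and t_pos: "0 < t" and t_less_1: "t < 1"
begin

abbreviation w :: "real \<Rightarrow> real" where
  "w \<equiv> weight al be ga A B t"

lemma weight_measurable [measurable]: "w \<in> borel_measurable borel"
  unfolding weight_def heaviside_def by measurable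

lemma weight_nonneg: "0 \<le> w y"
  using A_nonneg AB_nonneg by (simp add: weight_def heaviside_def)

lemma weight_zero: "w 0 = 0" "w 1 = 0" "w t = 0"
  using al_pos be_pos ga_pos by (simp_all add: weight_def)

lemma abs_weight_le_factors:
  assumes y: "y \<in> {0..1}"
  shows "\<bar>w y\<bar> \<le> (A + \<bar>B\<bar>) * \<bar>y - 0\<bar> powr al"
    and "\<bar>w y\<bar> \<le> (A + \<bar>B\<bar>) * \<bar>y - 1\<bar> powr be"
    and "\<bar>w y\<bar> \<le> (A + \<bar>B\<bar>) * \<bar>y - t\<bar> powr ga"
    and "\<bar>w y\<bar> \<le> A + \<bar>B\<bar>"
proof -
  define a b c where "a = \<bar>y - 0\<bar> powr al" "b = \<bar>y - 1\<bar> powr be" "c = \<bar>y - t\<bar> powr ga"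
  have bounds: "0 \<le> a" "a \<le> 1" "0 \<le> b" "b \<le> 1" "0 \<le> c" "c \<le> 1"
    using y t_pos t_less_1 al_pos be_pos ga_pos unfolding a_b_c_def by (auto intro!: powr_le1)
  then have "a * b * c \<le> a * 1 * 1" "a * b * c \<le> 1 * b * 1" "a * b * c \<le> 1 * 1 * c"
    "a * b * c \<le> 1 * 1 * 1"
    by (intro mult_mono; simp)+
  then have abc: "a * b * c \<le> a" "a * b * c \<le> b" "a * b * c \<le> c" "a * b * c \<le> 1"
    by simp_all
  have weight_le: "\<bar>w y\<bar> \<le> (A + \<bar>B\<bar>) * z" if "a * b * c \<le> z" for z
  proof -
    have "\<bar>w y\<bar> = a * b * c * \<bar>A + B * heaviside (y - t)\<bar>"
      using y unfolding a_b_c_def weight_def by (simp add: abs_mult abs_minus_commute[of y 1])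
    also have "\<dots> \<le> z * (A + \<bar>B\<bar>)"
      using A_nonneg AB_nonneg that bounds order_trans[OF mult_nonneg_nonneg[OF mult_nonneg_nonneg] that]
      by (intro mult_mono) (auto simp: heaviside_def)
    finally show ?thesis
      by (simp add: mult.commute)
  qed
  from weight_le[OF abc(1)] weight_le[OF abc(2)] weight_le[OF abc(3)] weight_le[OF abc(4)]
  show "\<bar>w y\<bar> \<le> (A + \<bar>B\<bar>) * \<bar>y - 0\<bar> powr al" "\<bar>w y\<bar> \<le> (A + \<bar>B\<bar>) * \<bar>y - 1\<bar> powr be"
    "\<bar>w y\<bar> \<le> (A + \<bar>B\<bar>) * \<bar>y - t\<bar> powr ga" "\<bar>w y\<bar> \<le> A + \<bar>B\<bar>"
    unfolding a_b_c_def by simp_all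
qed

lemma integrable_weighted: "integrable01 (\<lambda>y. poly p y * w y)"
  using abs_weight_le_factors(4) by (rule integrable01_poly_mult_bounded[OF weight_measurable])

lemma integrable_weighted_div:
  assumes "s \<in> {0, 1, t}"
  shows "integrable01 (\<lambda>y. poly p y * w y / (y - s))"
  using assms
proof (elim insertE emptyE)
  show "integrable01 (\<lambda>y. poly p y * w y / (y - s))" if "s = 0"
    using that al_pos abs_weight_le_factors(1) by (intro integrable01_poly_mult_div_zero[where e=al]) auto
  show "integrable01 (\<lambda>y. poly p y * w y / (y - s))" if "s = 1"
    using that be_pos abs_weight_le_factors(2) by (intro integrable01_poly_mult_div_zero[where e=be]) auto
  show "integrable01 (\<lambda>y. poly p y * w y / (y - s))" if "s = t"
    using that t_pos t_less_1 ga_pos abs_weight_le_factors(3)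
    by (intro integrable01_poly_mult_div_zero[where e=ga]) auto
qed

lemma weight_pos_interval: "\<exists>a b. a < b \<and> {a<..<b} \<subseteq> {0..1} \<and> (\<forall>y\<in>{a<..<b}. 0 < w y)"
proof (cases "A > 0")
  case True
  then have "\<forall>y\<in>{0<..<t}. 0 < w y"
    using t_less_1 by (auto simp: weight_def heaviside_def)
  then show ?thesis
    using t_pos t_less_1 by (intro exI[of _ 0] exI[of _ t]) auto
next
  case False
  then have "\<forall>y\<in>{t<..<1}. 0 < w y"
    using t_pos A_nonneg AB_nonneg not_both_zero by (auto simp: weight_def heaviside_def)
  then show ?thesis
    using t_pos t_less_1 by (intro exI[of _ t] exI[of _ 1]) auto
qed

definition jacobi_factor :: "real \<Rightarrow> real \<Rightarrow> real" where
  "jacobi_factor \<sigma> y = y powr al * (1 - y) powr be * (\<sigma> * (y - t)) powr ga"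

lemma weight_eq_jacobi_factor:
  "y \<le> t \<Longrightarrow> w y = A * jacobi_factor (-1) y"
  "t \<le> y \<Longrightarrow> w y = (A + B) * jacobi_factor 1 y"
  by (auto simp: weight_def jacobi_factor_def heaviside_def abs_if)

lemma jacobi_factor_has_derivative:
  assumes "0 < y" "y < 1" "0 < \<sigma> * (y - t)"
  shows "(jacobi_factor \<sigma> has_real_derivative
          jacobi_factor \<sigma> y * (al / y + be / (y - 1) + ga / (y - t))) (at y)"
proof -
  have powr_pred: "x powr (e - 1) = x powr e / x" if "x > 0" for x e :: real
    using that by (simp add: powr_diff)
  have "be / (y - 1) = - (be / (1 - y))"
    by (metis minus_diff_eq minus_divide_right)
  moreover have cancel: "\<sigma> * X / (\<sigma> * y - \<sigma> * t) = X / (y - t)" for X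
    using assms(3) by (auto simp: right_diff_distrib[symmetric])
  ultimately show ?thesis
    using assms unfolding jacobi_factor_def
    by (auto intro!: derivative_eq_intros simp: powr_pred algebra_simps) (metis cancel)
qed

text \<open>The integrand of \<open>\<integral>(f w)'\<close>, with the logarithmic derivative of \<open>w\<close> split into its three poles.\<close>

definition weighted_derivative :: "real poly \<Rightarrow> real \<Rightarrow> real" where
  "weighted_derivative f y = poly (pderiv f) y * w y + al * (poly f y * w y / y)
     + be * (poly f y * w y / (y - 1)) + ga * (poly f y * w y / (y - t))"

lemma weighted_derivative_has_integral_0:
  assumes ab: "0 \<le> a" "a \<le> b" "b \<le> 1"
    and sign: "\<And>y. y \<in> {a..b} \<Longrightarrow> 0 \<le> \<sigma> * (y - t)" "\<And>y. y \<in> {a<..<b} \<Longrightarrow> 0 < \<sigma> * (y - t)"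
    and weight_eq: "\<And>y. y \<in> {a..b} \<Longrightarrow> w y = c * jacobi_factor \<sigma> y"
    and vanish: "jacobi_factor \<sigma> a = 0" "jacobi_factor \<sigma> b = 0"
  shows "(weighted_derivative f has_integral 0) {a..b}"
proof -
  define F where "F y = poly f y * (c * jacobi_factor \<sigma> y)" for y
  have "(weighted_derivative f has_integral F b - F a) {a..b}"
  proof (rule fundamental_theorem_of_calculus_interior[OF ab(2)])
    show "continuous_on {a..b} F"
      unfolding F_def jacobi_factor_def using ab sign(1) al_pos be_pos ga_pos
      by (intro continuous_intros continuous_on_powr') auto
    fix y assume y: "y \<in> {a<..<b}"
    then have "0 < y" "y < 1" "y \<noteq> t"
      using ab sign(2)[OF y] by auto
    have "(F has_real_derivative poly (pderiv f) y * (c * jacobi_factor \<sigma> y) +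
        poly f y * (c * (jacobi_factor \<sigma> y * (al / y + be / (y - 1) + ga / (y - t))))) (at y)"
      unfolding F_def using \<open>0 < y\<close> \<open>y < 1\<close> sign(2)[OF y]
      by (auto intro!: derivative_eq_intros jacobi_factor_has_derivative)
    moreover have "w y = c * jacobi_factor \<sigma> y"
      using y by (intro weight_eq) auto
    ultimately show "(F has_vector_derivative weighted_derivative f y) (at y)"
      by (simp add: weighted_derivative_def has_real_derivative_iff_has_vector_derivative[symmetric]
          algebra_simps)
  qed
  then show ?thesis
    using vanish by (simp add: F_def)
qed

lemma integrable_weighted_div_0: "integrable01 (\<lambda>y. poly f y * w y / y)"
  and integrable_weighted_div_1: "integrable01 (\<lambda>y. poly f y * w y / (y - 1))"
  and integrable_weighted_div_t: "integrable01 (\<lambda>y. poly f y * w y / (y - t))"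
  using integrable_weighted_div[of 0 f] integrable_weighted_div[of 1 f] integrable_weighted_div[of t f]
  by simp_all

lemma integrable_weighted_derivative: "integrable01 (weighted_derivative f)"
  unfolding weighted_derivative_def
  by (intro set_integral_add(1) set_integrable_mult_right integrable_weighted
      integrable_weighted_div_0 integrable_weighted_div_1 integrable_weighted_div_t)

lemma integration_by_parts_identity:
  "int01 (\<lambda>y. poly (pderiv f) y * w y) + al * int01 (\<lambda>y. poly f y * w y / y)
   + be * int01 (\<lambda>y. poly f y * w y / (y - 1)) + ga * int01 (\<lambda>y. poly f y * w y / (y - t)) = 0"
proof -
  have "(weighted_derivative f has_integral 0) {0..t}"
  proof (rule weighted_derivative_has_integral_0[where \<sigma>="-1" and c=A])
    show "jacobi_factor (-1) 0 = 0" "jacobi_factor (-1) t = 0"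
      by (simp_all add: jacobi_factor_def)
  qed (use t_pos t_less_1 weight_eq_jacobi_factor(1) in auto)
  moreover have "(weighted_derivative f has_integral 0) {t..1}"
  proof (rule weighted_derivative_has_integral_0[where \<sigma>=1 and c="A + B"])
    show "jacobi_factor 1 t = 0" "jacobi_factor 1 1 = 0"
      by (simp_all add: jacobi_factor_def)
  qed (use t_pos t_less_1 weight_eq_jacobi_factor(2) in auto)
  ultimately have "(weighted_derivative f has_integral 0 + 0) {0..1}"
    using t_pos t_less_1 by (intro has_integral_combine[of 0 t 1]) auto
  then have "int01 (weighted_derivative f) = 0"
    unfolding int01_eq_integral[OF integrable_weighted_derivative] by (simp add: integral_unique)
  moreover have "int01 (weighted_derivative f) =
      int01 (\<lambda>y. poly (pderiv f) y * w y) + al * int01 (\<lambda>y. poly f y * w y / y)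
      + be * int01 (\<lambda>y. poly f y * w y / (y - 1)) + ga * int01 (\<lambda>y. poly f y * w y / (y - t))"
    unfolding weighted_derivative_def
    by (simp only: int01_add int01_cmult set_integral_add(1) set_integrable_mult_right
        integrable_weighted integrable_weighted_div_0 integrable_weighted_div_1
        integrable_weighted_div_t)
  ultimately show ?thesis
    by simp
qed

end

lemma mixed_product_identity:
  fixes b x x' R R' y r al be ga m :: real
  assumes "b * x * x' = y\<^sup>2 - al * y"
    and "b * R * R' = r\<^sup>2 + be * r"
    and "b * (R - x) * (R' - x') = (r - y - m)\<^sup>2 - ga * (r - y - m)"
  shows "b * (R * x' + x * R') = 2 * r * y + (2 * m + be + ga) * r - (2 * m + al + ga) * y - m * (m + ga)"
proof -
  have "b * (R * x' + x * R') = b * R * R' + b * x * x' - b * (R - x) * (R' - x')"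
    by (simp add: algebra_simps)
  then show ?thesis
    unfolding assms by (simp add: power2_eq_square algebra_simps)
qed

locale jacobi_type_orthogonal_polynomials = jacobi_type_weight +
  fixes P :: "nat \<Rightarrow> real poly"
  assumes monic_orth: "monic_orthogonal (weight al be ga A B t) P"

sublocale jacobi_type_orthogonal_polynomials \<subseteq> orthogonal_polynomials_01 w P
  using integrable_weighted weight_nonneg weight_pos_interval monic_orth by unfold_locales auto

context jacobi_type_orthogonal_polynomials
begin

lemma Rseq_eq: "Rseq be w P k = - be / h k * int01 (\<lambda>y. (poly (P k) y)\<^sup>2 * w y / (y - 1))"
  unfolding Rseq_def by (simp add: int01_div_one_minus)

lemma rseq_eq:
  "rseq be w P n = - be / h (n - 1) * int01 (\<lambda>y. poly (P n) y * poly (P (n - 1)) y * w y / (y - 1))"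
  unfolding rseq_def by (simp add: int01_div_one_minus)

lemma integration_by_parts_square:
  "ga / h k * int01 (\<lambda>y. (poly (P k) y)\<^sup>2 * w y / (y - t)) = Rseq be w P k - xseq al w P k"
  using integration_by_parts_identity[of "P k * P k"] inner_pderiv_square[of k] hnorm_pos[of k]
  by (simp add: Rseq_eq xseq_def power2_eq_square field_simps)

lemma integration_by_parts_consecutive:
  assumes "n \<ge> 1"
  shows "ga / h (n - 1) * int01 (\<lambda>y. poly (P n) y * poly (P (n - 1)) y * w y / (y - t))
    = rseq be w P n - yseq al w P n - real n"
  using integration_by_parts_identity[of "P n * P (n - 1)"] inner_pderiv_consecutive[OF assms]
    hnorm_pos[of "n - 1"]
  by (simp add: rseq_eq yseq_def field_simps)

lemma compatibility_conditions:
  assumes n: "n \<ge> 1"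
    and rec: "[:0, 1:] * P n = P (Suc n) + smult a (P n) + smult b (P (n - 1))"
  defines "x \<equiv> xseq al w P" and "R \<equiv> Rseq be w P" and "y \<equiv> yseq al w P" and "r \<equiv> rseq be w P"
  shows "b * R n * R (n - 1) = (r n)\<^sup>2 + be * r n"
    and "b * x n * x (n - 1) = (y n)\<^sup>2 - al * y n"
    and "b * (R n * x (n - 1) + x n * R (n - 1))
          = 2 * r n * y n + (2 * real n + be + ga) * r n - (2 * real n + al + ga) * y n - real n * (real n + ga)"
proof -
  have hb: "h n = b * h (n - 1)"
    using hnorm_recurrence[OF rec n] .
  have div_0: "integrable01 (\<lambda>y. poly p y * w y / (y - 0))"
    and div_1: "integrable01 (\<lambda>y. poly p y * w y / (y - 1))"
    and div_t: "integrable01 (\<lambda>y. poly p y * w y / (y - t))" for p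
    by (rule integrable_weighted_div, simp)+
  show x_prod: "b * x n * x (n - 1) = (y n)\<^sup>2 - al * y n"
    using scaled_singular_product[OF weight_zero(1) div_0 n hb, of al]
    by (simp add: x_def y_def xseq_def yseq_def)
  show R_prod: "b * R n * R (n - 1) = (r n)\<^sup>2 + be * r n"
    using scaled_singular_product[OF weight_zero(2) div_1 n hb, of "- be"]
    by (simp add: R_def r_def Rseq_eq rseq_eq)
  have "b * (R n - x n) * (R (n - 1) - x (n - 1))
      = (r n - y n - real n)\<^sup>2 - ga * (r n - y n - real n)"
    using scaled_singular_product[OF weight_zero(3) div_t n hb, of ga]
    unfolding x_def R_def y_def r_def integration_by_parts_square integration_by_parts_consecutive[OF n] .
  then show "b * (R n * x (n - 1) + x n * R (n - 1))
          = 2 * r n * y n + (2 * real n + be + ga) * r n - (2 * real n + al + ga) * y n - real n * (real n + ga)"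
    by (rule mixed_product_identity[OF x_prod R_prod])
qed

end

theorem proposition2p5:
  fixes al be ga A B t :: real
    and P :: "nat \<Rightarrow> real poly"
    and a b :: "nat \<Rightarrow> real"
    and n :: nat
  assumes "al > 0" "be > 0" "ga > 0"
    and "A \<ge> 0" "A + B \<ge> 0" "\<not> (A = 0 \<and> A + B = 0)"
    and "0 < t" "t < 1"
    and orth: "monic_orthogonal (weight al be ga A B t) P"
    and rec0: "[:0, 1:] * P 0 = P 1 + smult (a 0) (P 0)"
    and rec: "\<forall>k\<ge>1. [:0, 1:] * P k = P (Suc k) + smult (a k) (P k) + smult (b k) (P (k - 1))"
    and "n \<ge> 1"
  shows "let w = weight al be ga A B t;
             x = xseq al w P; R = Rseq be w P; y = yseq al w P; r = rseq be w P
         in b n * R n * R (n - 1) = (r n)^2 + be * r n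
          \<and> b n * x n * x (n - 1) = (y n)^2 - al * y n
          \<and> b n * (R n * x (n - 1) + x n * R (n - 1))
              = 2 * r n * y n + (2 * real n + be + ga) * r n
                - (2 * real n + al + ga) * y n - real n * (real n + ga)"
proof -
  interpret jacobi_type_orthogonal_polynomials al be ga A B t P
    using assms by unfold_locales auto
  have "[:0, 1:] * P n = P (Suc n) + smult (a n) (P n) + smult (b n) (P (n - 1))"
    using rec \<open>n \<ge> 1\<close> by blast
  from compatibility_conditions[OF \<open>n \<ge> 1\<close> this] show ?thesis
    unfolding Let_def by blast
qed

end
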